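(* Let $\mathfrak L=\mathbb V\oplus\mathbb W$ be a color gLt-algebra admitting a quasi-multiplicative basis $\mathfrak B=\{e_i\}_{i\in I}$ of $\mathbb W\neq0$. Suppose $\mathfrak B$ is a $\mu$-quasi-multiplicative basis and $\mathbb V$ is tight. Then $\mathfrak L$ is minimal if and only if all elements of $I$ are connected to each other.
   Context: Let $\mathbb F$ be a field, $\mathbb G$ an abelian group, $n\ge 2$, and $\epsilon:\mathbb G\times\mathbb G\to\mathbb F\setminus\{0\}$ a bicharacter ($\epsilon(k,g+h)=\epsilon(k,g)\epsilon(k,h)$, $\epsilon(g+h,k)=\epsilon(g,k)\epsilon(h,k)$, $\epsilon(g,h)\epsilon(h,g)=1$). A graded $n$-ary algebra is a $\mathbb G$-graded vector space $\mathfrak L=\bigoplus_{g\in\mathbb G}\mathfrak L_g$ with an $n$-linear map $\langle\cdot,\dots,\cdot\rangle:\mathfrak L^n\to\mathfrak L$ such that $\langle\mathfrak L_{g_1},\dots,\mathfrak L_{g_n}\rangle\subset\mathfrak L_{g_1+\dots+g_n}$. For $\sigma\in\mathbb S_n$ write $\langle x_1,\dots,x_n\rangle_\sigma:=\langle x_{\sigma(1)},\dots,x_{\sigma(n)}\rangle$; for subsets $A_1,\dots,A_n$, $\langle A_1,\dots,A_n\rangle_\sigma$ denotes the linear span of all $\langle x_1,\dots,x_n\rangle_\sigma$ with $x_r\in A_r$. A color gLt-algebra is a graded $n$-ary algebra satisfying, for each $k=1,\dots,n$ and fixed scalars $\alpha^{\sigma_1,\sigma_2}_{i,j,k}\in\mathbb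 F$, the color version (each term on the right multiplied by the product of values of $\epsilon$ on the degrees of the homogeneous arguments transposed in passing from the left-hand order to the order of that term) of the identity $\langle y_1,\dots,y_{k-1},\langle x_1,\dots,x_n\rangle,y_k,\dots,y_{n-1}\rangle=\sum_{1\le i,j\le n,\,\sigma_1\in\mathbb S_n,\,\sigma_2\in\mathbb S_{n-1}}\alpha^{\sigma_1,\sigma_2}_{i,j,k}\langle x_{\sigma_1(1)},\dots,x_{\sigma_1(i-1)},\langle y_{\sigma_2(1)},\dots,y_{\sigma_2(j-1)},x_{\sigma_1(i)},y_{\sigma_2(j)},\dots,y_{\sigma_2(n-1)}\rangle,x_{\sigma_1(i+1)},\dots,x_{\sigma_1(n)}\rangle$. A $\mathbb G$-graded subspace $\mathcal I\subset\mathfrak L$ is a color gLt-ideal if $\langle\mathcal I,\mathfrak L,\dots,\mathfrak L\rangle_\sigma\subset\mathcal I$ for every $\sigma\in\mathbb S_n$. $\mathfrak L$ admits a quasi-multiplicative basis if $\mathfrak L=\mathbb V\oplus\mathbb W$ with $\mathbb V$, $\mathbb W\ne0$ graded subspaces and $\mathfrak B=\{e_i\}_{i\in I}$ a basis of homogeneous elements of $\mathbb W$ such that: (1) for $i_1,\dots,i_n\in I$, either $\langle e_{i_1},\dots,e_{i_n}\rangle\in\mathbb Fe_j$ for some $j\in I$ or $\langle e_{i_1},\dots,e_{i_n}\rangle\in\mathbb V$; (2) for $0<k<n$, $i_1,\dots,i_k\in I$ and $\sigma\in\mathbb S_n$, $\langle e_{i_1},\dots,e_{i_k},\mathbb V,\dots,\mathbb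 V\rangle_\sigma\subset\mathbb Fe_{j_\sigma}$ for some $j_\sigma\in I$; (3) either $\langle\mathbb V,\dots,\mathbb V\rangle\subset\mathbb Fe_j$ for some $j\in I$ or $\langle\mathbb V,\dots,\mathbb V\rangle\subset\mathbb V$. A color gLt-ideal $\mathfrak S$ admits a basis inherited by the one of $\mathfrak L$ if $\mathfrak S=\mathbb V_{\mathfrak S}\oplus\mathbb W_{\mathfrak S}$ with $\mathbb V_{\mathfrak S}$ a graded subspace of $\mathbb V$ and $0\ne\mathbb W_{\mathfrak S}$ a graded subspace of $\mathbb W$ admitting a subset $\mathfrak B'\subset\mathfrak B$ as a basis. $\mathfrak L$ is minimal if its only nonzero color gLt-ideal admitting a basis inherited by the one of $\mathfrak L$ is $\mathfrak L$ itself. Index maps: let $v$ be a symbol not in $I$, $\mathfrak I:=I\,\dot\cup\,\{v\}$; for each $j\in\mathfrak I$ take a new symbol $\overline j$, $\overline I:=\{\overline i:i\in I\}$, $\overline{\mathfrak I}:=\overline I\,\dot\cup\,\{\overline v\}$; set $\overline{(\overline j)}:=j$, $\overline J:=\{\overline j:j\in J\}$ for a set $J$ of symbols ($\overline\emptyset=\emptyset$). Put $u_j:=e_j$ for $j\in I$ and $u_v:=\mathbb V$. For $\sigma\in\mathbb S_n$ and $(j_1,\dots,j_n)\in\mathfrak I^n$ let $a_\sigma(j_1,\dots,j_n)=\{r\}$ if $r\in I$ and $0\ne\langle u_{j_1},\dots,u_{j_n}\rangle_\sigma\subset\mathbb Fe_r$, $=\{v\}$ if $0\ne\langle u_{j_1},\dots,u_{j_n}\rangle_\sigma\subset\mathbb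 V$, and $=\emptyset$ otherwise. For $j,j_2,\dots,j_n\in\mathfrak I$ let $b_\sigma(j,\overline j_2,\dots,\overline j_n):=\{x\in\mathfrak I: a_\sigma(x,j_2,\dots,j_n)=\{j\}\}$. Define $\mu$ on $(\mathfrak I\,\dot\cup\,\overline{\mathfrak I})\times(\mathfrak I^{n-1}\,\dot\cup\,\overline{\mathfrak I}^{n-1})$ with values subsets of $\mathfrak I$ by: $\mu(j,j_1,\dots,j_{n-1})=\bigcup_{\sigma\in\mathbb S_n}a_\sigma(j,j_1,\dots,j_{n-1})$ for $j,j_1,\dots,j_{n-1}\in\mathfrak I$; $\mu(j,\overline j_1,\dots,\overline j_{n-1})=\bigcup_{\sigma\in\mathbb S_n}b_\sigma(j,\overline j_1,\dots,\overline j_{n-1})$ for $j,j_1,\dots,j_{n-1}\in\mathfrak I$; $\mu(\overline j,j_1,\dots,j_{n-1})=\bigcup_{1\le k\le n-1,\ \sigma\in\mathbb S_n}b_\sigma(j_k,\overline j,\overline j_1,\dots,\overline j_{k-1},\overline j_{k+1},\dots,\overline j_{n-1})$ for $j,j_1,\dots,j_{n-1}\in\mathfrak I$; and $\mu(\overline j,\overline j_1,\dots,\overline j_{n-1})=\emptyset$. Define $\phi$ on pairs $(J,X)$ with $J\subset I\,\dot\cup\,\overline I$ and $X\in\mathfrak I^{n-1}\,\dot\cup\,\overline{\mathfrak I}^{n-1}$ by $\phi(\emptyset,X)=\emptyset$ and, for $J\ne\emptyset$, $\phi(J,X):=K\cup\overline K$ where $K:=\big(\bigcup_{j\in J}\mu(j,X)\big)\setminus\{v\}$.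 $\mathbb V$ is tight if $\mathbb V=\{0\}$ or $\mathbb V=\sum\{\mathbb F\langle e_{i_1},\dots,e_{i_n}\rangle: i_1,\dots,i_n\in I,\ \mu(i_1,\dots,i_n)=\{v\}\}$. The basis $\mathfrak B$ is $\mu$-quasi-multiplicative if whenever $i\in I$, $k_1\in\mathfrak I\,\dot\cup\,\overline{\mathfrak I}$ and $(k_2,\dots,k_n)\in\mathfrak I^{n-1}\,\dot\cup\,\overline{\mathfrak I}^{n-1}$ satisfy $i\in\mu(k_1,k_2,\dots,k_n)$, then $e_i\in\langle w_{k_1},\dots,w_{k_n}\rangle_\sigma$ (linear span) for some $\sigma\in\mathbb S_n$, where $w_k:=e_j$ if $k\in\{j,\overline j\}$ with $j\in I$, and $w_k:=\mathbb V$ if $k\in\{v,\overline v\}$. Connections: for distinct $i,j\in I$, $i$ is connected to $j$ if there exist $t\ge1$, $X_1,\dots,X_t\in\mathfrak I^{n-1}\,\dot\cup\,\overline{\mathfrak I}^{n-1}$ and $\widetilde i\in\{i,\overline i\}$ such that $\phi(\{\widetilde i\},X_1)\ne\emptyset$, …, $\phi(\cdots\phi(\{\widetilde i\},X_1)\cdots,X_{t-1})\ne\emptyset$, and $j\in\phi(\cdots\phi(\phi(\{\widetilde i\},X_1),X_2)\cdots,X_t)$; every $i$ is connected to itself. *)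

theory Defs
  imports Complex_Main "HOL-Combinatorics.Permutations"
begin

definition graded_space :: "('f::field \<Rightarrow> 'v::ab_group_add \<Rightarrow> 'v) \<Rightarrow> ('g \<Rightarrow> 'v set) \<Rightarrow> bool" where
  "graded_space scale Lg \<longleftrightarrow>
     vector_space scale \<and>
     (\<forall>g. module.subspace scale (Lg g)) \<and>
     module.span scale (\<Union>g. Lg g) = UNIV \<and>
     (\<forall>g. Lg g \<inter> module.span scale (\<Union>h\<in>-{g}. Lg h) = {0})"

definition graded_subspace :: "('f::field \<Rightarrow> 'v::ab_group_add \<Rightarrow> 'v) \<Rightarrow> ('g \<Rightarrow> 'v set) \<Rightarrow> 'v set \<Rightarrow> bool" where
  "graded_subspace scale Lg S \<longleftrightarrow>
     module.subspace scale S \<and> S = module.span scale (\<Union>g. S \<inter> Lg g)"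

definition bicharacter :: "('g::ab_group_add \<Rightarrow> 'g \<Rightarrow> 'f::field) \<Rightarrow> bool" where
  "bicharacter eps \<longleftrightarrow>
     (\<forall>g h. eps g h \<noteq> 0) \<and>
     (\<forall>k g h. eps k (g + h) = eps k g * eps k h) \<and>
     (\<forall>k g h. eps (g + h) k = eps g k * eps h k) \<and>
     (\<forall>g h. eps g h * eps h g = 1)"

section \<open>Graded n-ary algebras (arguments as lists of length n, positions 0..n-1)\<close>

definition graded_nary_algebra ::
  "('f::field \<Rightarrow> 'v::ab_group_add \<Rightarrow> 'v) \<Rightarrow> ('g::ab_group_add \<Rightarrow> 'v set) \<Rightarrow> nat \<Rightarrow> ('v list \<Rightarrow> 'v) \<Rightarrow> bool" where
  "graded_nary_algebra scale Lg n mul \<longleftrightarrow>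
     graded_space scale Lg \<and>
     (\<forall>xs r. length xs = n \<longrightarrow> r < n \<longrightarrow>
        Vector_Spaces.linear scale scale (\<lambda>x. mul (xs[r := x]))) \<and>
     (\<forall>xs gs. length xs = n \<longrightarrow> length gs = n \<longrightarrow> (\<forall>r<n. xs ! r \<in> Lg (gs ! r)) \<longrightarrow>
        mul xs \<in> Lg (sum_list gs))"

definition perm_list :: "(nat \<Rightarrow> nat) \<Rightarrow> 'a list \<Rightarrow> 'a list" where
  "perm_list s xs = map (\<lambda>t. xs ! s t) [0..<length xs]"

text \<open>Color (Koszul) factor: ds are the degrees of the arguments in the left-hand order
  (labels 0..m-1), ord is the list of labels in the order of the term; for every pair of
  arguments whose relative order is reversed we multiply by eps(degree of the one that
  was first, degree of the one that was second).\<close>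
definition koszul :: "('g \<Rightarrow> 'g \<Rightarrow> 'f::field) \<Rightarrow> 'g list \<Rightarrow> nat list \<Rightarrow> 'f" where
  "koszul eps ds ord =
     (\<Prod>p\<in>{(a, b). a < b \<and> b < length ord \<and> ord ! b < ord ! a}.
        eps (ds ! (ord ! snd p)) (ds ! (ord ! fst p)))"

text \<open>Order of the labels in the term of the right-hand side indexed by i, j, s1, s2,
  when the inner product sits at position k (0-based) of the left-hand side.
  Labels of the left-hand side: y_t has label t if t < k and t + n otherwise; x_s has label k + s.\<close>
definition rhs_order :: "nat \<Rightarrow> nat \<Rightarrow> nat \<Rightarrow> nat \<Rightarrow> (nat \<Rightarrow> nat) \<Rightarrow> (nat \<Rightarrow> nat) \<Rightarrow> nat list" where
  "rhs_order n k i j s1 s2 =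
     (let xl = (\<lambda>s. k + s); yl = (\<lambda>t. if t < k then t else t + n);
          L1 = map s1 [0..<n]; L2 = map s2 [0..<n - 1]
      in map xl (take i L1) @ map yl (take j L2) @ [xl (L1 ! i)] @ map yl (drop j L2)
         @ map xl (drop (Suc i) L1))"

definition color_gLt_algebra ::
  "('f::field \<Rightarrow> 'v::ab_group_add \<Rightarrow> 'v) \<Rightarrow> ('g::ab_group_add \<Rightarrow> 'v set) \<Rightarrow> ('g \<Rightarrow> 'g \<Rightarrow> 'f)
   \<Rightarrow> nat \<Rightarrow> ('v list \<Rightarrow> 'v) \<Rightarrow> (nat \<Rightarrow> nat \<Rightarrow> nat \<Rightarrow> (nat \<Rightarrow> nat) \<Rightarrow> (nat \<Rightarrow> nat) \<Rightarrow> 'f) \<Rightarrow> bool" where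
  "color_gLt_algebra scale Lg eps n mul alpha \<longleftrightarrow>
     2 \<le> n \<and> bicharacter eps \<and> graded_nary_algebra scale Lg n mul \<and>
     (\<forall>k<n. \<forall>xs dxs ys dys.
        length xs = n \<and> length dxs = n \<and> length ys = n - 1 \<and> length dys = n - 1 \<and>
        (\<forall>t<n. xs ! t \<in> Lg (dxs ! t)) \<and> (\<forall>t<n - 1. ys ! t \<in> Lg (dys ! t)) \<longrightarrow>
        mul (take k ys @ [mul xs] @ drop k ys) =
        (\<Sum>i<n. \<Sum>j<n. \<Sum>s1\<in>{s. s permutes {..<n}}. \<Sum>s2\<in>{s. s permutes {..<n - 1}}.
           scale (alpha i j k s1 s2 * koszul eps (take k dys @ dxs @ drop k dys) (rhs_order n k i j s1 s2))
             (let xs' = perm_list s1 xs; ys' = perm_list s2 ys in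
              mul (take i xs' @ [mul (take j ys' @ [xs' ! i] @ drop j ys')] @ drop (Suc i) xs'))))"

text \<open>Span of all products with the arguments permuted by s, the r-th argument ranging over As ! r
  (this is the notation of the paper with 0-based positions).\<close>
definition bracket_set :: "('f::field \<Rightarrow> 'v::ab_group_add \<Rightarrow> 'v) \<Rightarrow> nat \<Rightarrow> ('v list \<Rightarrow> 'v)
    \<Rightarrow> 'v set list \<Rightarrow> (nat \<Rightarrow> nat) \<Rightarrow> 'v set" where
  "bracket_set scale n mul As s =
     module.span scale {mul (perm_list s xs) | xs. length xs = n \<and> (\<forall>r<n. xs ! r \<in> As ! r)}"

definition gLt_ideal :: "('f::field \<Rightarrow> 'v::ab_group_add \<Rightarrow> 'v) \<Rightarrow> ('g \<Rightarrow> 'v set) \<Rightarrow> nat \<Rightarrow> ('v list \<Rightarrow> 'v) \<Rightarrow> 'v set \<Rightarrow> bool" where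
  "gLt_ideal scale Lg n mul S \<longleftrightarrow>
     graded_subspace scale Lg S \<and>
     (\<forall>s. s permutes {..<n} \<longrightarrow> bracket_set scale n mul (S # replicate (n - 1) UNIV) s \<subseteq> S)"

section \<open>Quasi-multiplicative bases; the index set I is the type 'i\<close>

definition line :: "('f::field \<Rightarrow> 'v::ab_group_add \<Rightarrow> 'v) \<Rightarrow> 'v \<Rightarrow> 'v set" where
  "line scale x = range (\<lambda>c. scale c x)"

definition quasi_mult_basis ::
  "('f::field \<Rightarrow> 'v::ab_group_add \<Rightarrow> 'v) \<Rightarrow> ('g \<Rightarrow> 'v set) \<Rightarrow> nat \<Rightarrow> ('v list \<Rightarrow> 'v)
    \<Rightarrow> 'v set \<Rightarrow> 'v set \<Rightarrow> ('i \<Rightarrow> 'v) \<Rightarrow> bool" where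
  "quasi_mult_basis scale Lg n mul V W e \<longleftrightarrow>
     graded_subspace scale Lg V \<and> graded_subspace scale Lg W \<and> W \<noteq> {0} \<and>
     V \<inter> W = {0} \<and> {v + w | v w. v \<in> V \<and> w \<in> W} = UNIV \<and>
     inj e \<and> \<not> module.dependent scale (range e) \<and> module.span scale (range e) = W \<and>
     (\<forall>i. \<exists>g. e i \<in> Lg g) \<and>
     (\<forall>is. length is = n \<longrightarrow>
        (\<exists>j. mul (map e is) \<in> line scale (e j)) \<or> mul (map e is) \<in> V) \<and>
     (\<forall>k is s. 0 < k \<and> k < n \<and> length is = k \<and> s permutes {..<n} \<longrightarrow>
        (\<exists>j. bracket_set scale n mul (map (\<lambda>i. {e i}) is @ replicate (n - k) V) s
               \<subseteq> line scale (e j))) \<and>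
     ((\<exists>j. bracket_set scale n mul (replicate n V) id \<subseteq> line scale (e j)) \<or>
      bracket_set scale n mul (replicate n V) id \<subseteq> V)"

text \<open>Ix i stands for i \<in> I, Vx for the new symbol v; Pl and Br distinguish j and its bar.\<close>
datatype 'i ix = Ix 'i | Vx
datatype 'a br = Pl 'a | Br 'a

fun u_set :: "'v set \<Rightarrow> ('i \<Rightarrow> 'v) \<Rightarrow> 'i ix \<Rightarrow> 'v set" where
  "u_set V e (Ix i) = {e i}"
| "u_set V e Vx = V"

definition a_map :: "('f::field \<Rightarrow> 'v::ab_group_add \<Rightarrow> 'v) \<Rightarrow> nat \<Rightarrow> ('v list \<Rightarrow> 'v) \<Rightarrow> 'v set \<Rightarrow> ('i \<Rightarrow> 'v)
    \<Rightarrow> (nat \<Rightarrow> nat) \<Rightarrow> 'i ix list \<Rightarrow> 'i ix set" where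
  "a_map scale n mul V e s js =
     (let B = bracket_set scale n mul (map (u_set V e) js) s in
       {Ix r | r. B \<noteq> {0} \<and> B \<subseteq> line scale (e r)} \<union> (if B \<noteq> {0} \<and> B \<subseteq> V then {Vx} else {}))"

definition b_map :: "('f::field \<Rightarrow> 'v::ab_group_add \<Rightarrow> 'v) \<Rightarrow> nat \<Rightarrow> ('v list \<Rightarrow> 'v) \<Rightarrow> 'v set \<Rightarrow> ('i \<Rightarrow> 'v)
    \<Rightarrow> (nat \<Rightarrow> nat) \<Rightarrow> 'i ix \<Rightarrow> 'i ix list \<Rightarrow> 'i ix set" where
  "b_map scale n mul V e s j js = {x. a_map scale n mul V e s (x # js) = {j}}"

fun mu :: "('f::field \<Rightarrow> 'v::ab_group_add \<Rightarrow> 'v) \<Rightarrow> nat \<Rightarrow> ('v list \<Rightarrow> 'v) \<Rightarrow> 'v set \<Rightarrow> ('i \<Rightarrow> 'v)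
    \<Rightarrow> 'i ix br \<Rightarrow> 'i ix list br \<Rightarrow> 'i ix set" where
  "mu scale n mul V e (Pl j) (Pl js) = (\<Union>s\<in>{s. s permutes {..<n}}. a_map scale n mul V e s (j # js))"
| "mu scale n mul V e (Pl j) (Br js) = (\<Union>s\<in>{s. s permutes {..<n}}. b_map scale n mul V e s j js)"
| "mu scale n mul V e (Br j) (Pl js) =
     (\<Union>k<n - 1. \<Union>s\<in>{s. s permutes {..<n}}.
        b_map scale n mul V e s (js ! k) (j # take k js @ drop (Suc k) js))"
| "mu scale n mul V e (Br j) (Br js) = {}"

fun br_ix :: "'i br \<Rightarrow> 'i ix br" where
  "br_ix (Pl i) = Pl (Ix i)"
| "br_ix (Br i) = Br (Ix i)"

definition phi :: "('f::field \<Rightarrow> 'v::ab_group_add \<Rightarrow> 'v) \<Rightarrow> nat \<Rightarrow> ('v list \<Rightarrow> 'v) \<Rightarrow> 'v set \<Rightarrow> ('i \<Rightarrow> 'v)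
    \<Rightarrow> 'i br set \<Rightarrow> 'i ix list br \<Rightarrow> 'i br set" where
  "phi scale n mul V e J X =
     (if J = {} then {}
      else (let K = {i. Ix i \<in> (\<Union>j\<in>J. mu scale n mul V e (br_ix j) X)} in Pl ` K \<union> Br ` K))"

fun phi_iter :: "('f::field \<Rightarrow> 'v::ab_group_add \<Rightarrow> 'v) \<Rightarrow> nat \<Rightarrow> ('v list \<Rightarrow> 'v) \<Rightarrow> 'v set \<Rightarrow> ('i \<Rightarrow> 'v)
    \<Rightarrow> 'i br set \<Rightarrow> 'i ix list br list \<Rightarrow> 'i br set" where
  "phi_iter scale n mul V e J [] = J"
| "phi_iter scale n mul V e J (X # Xs) = phi_iter scale n mul V e (phi scale n mul V e J X) Xs"

text \<open>Admissible second arguments: elements of \<frak>I^{n-1} or of the barred copy.\<close>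
fun tuple_ok :: "nat \<Rightarrow> 'a list br \<Rightarrow> bool" where
  "tuple_ok n (Pl js) = (length js = n - 1)"
| "tuple_ok n (Br js) = (length js = n - 1)"

definition tight :: "('f::field \<Rightarrow> 'v::ab_group_add \<Rightarrow> 'v) \<Rightarrow> nat \<Rightarrow> ('v list \<Rightarrow> 'v) \<Rightarrow> 'v set \<Rightarrow> ('i \<Rightarrow> 'v) \<Rightarrow> bool" where
  "tight scale n mul V e \<longleftrightarrow>
     V = {0} \<or>
     V = module.span scale {mul (map e (i # is)) | i is. length is = n - 1 \<and>
                               mu scale n mul V e (Pl (Ix i)) (Pl (map Ix is)) = {Vx}}"

fun w_set :: "'v set \<Rightarrow> ('i \<Rightarrow> 'v) \<Rightarrow> 'i ix br \<Rightarrow> 'v set" where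
  "w_set V e (Pl k) = u_set V e k"
| "w_set V e (Br k) = u_set V e k"

fun unbar_list :: "'a list br \<Rightarrow> 'a br list" where
  "unbar_list (Pl js) = map Pl js"
| "unbar_list (Br js) = map Br js"

definition mu_quasi_mult :: "('f::field \<Rightarrow> 'v::ab_group_add \<Rightarrow> 'v) \<Rightarrow> nat \<Rightarrow> ('v list \<Rightarrow> 'v) \<Rightarrow> 'v set \<Rightarrow> ('i \<Rightarrow> 'v) \<Rightarrow> bool" where
  "mu_quasi_mult scale n mul V e \<longleftrightarrow>
     (\<forall>i k1 X. tuple_ok n X \<and> Ix i \<in> mu scale n mul V e k1 X \<longrightarrow>
        (\<exists>s. s permutes {..<n} \<and>
             e i \<in> bracket_set scale n mul (map (w_set V e) (k1 # unbar_list X)) s))"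

definition connected :: "('f::field \<Rightarrow> 'v::ab_group_add \<Rightarrow> 'v) \<Rightarrow> nat \<Rightarrow> ('v list \<Rightarrow> 'v) \<Rightarrow> 'v set \<Rightarrow> ('i \<Rightarrow> 'v)
    \<Rightarrow> 'i \<Rightarrow> 'i \<Rightarrow> bool" where
  "connected scale n mul V e i j \<longleftrightarrow>
     i = j \<or>
     (\<exists>Xs it. Xs \<noteq> [] \<and> (\<forall>X\<in>set Xs. tuple_ok n X) \<and> it \<in> {Pl i, Br i} \<and>
        (\<forall>s. 1 \<le> s \<and> s < length Xs \<longrightarrow> phi_iter scale n mul V e {it} (take s Xs) \<noteq> {}) \<and>
        Pl j \<in> phi_iter scale n mul V e {it} Xs)"

definition inherited_basis_ideal ::
  "('f::field \<Rightarrow> 'v::ab_group_add \<Rightarrow> 'v) \<Rightarrow> ('g \<Rightarrow> 'v set) \<Rightarrow> 'v set \<Rightarrow> 'v set \<Rightarrow> ('i \<Rightarrow> 'v) \<Rightarrow> 'v set \<Rightarrow> bool" where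
  "inherited_basis_ideal scale Lg V W e S \<longleftrightarrow>
     (\<exists>VS WS J. graded_subspace scale Lg VS \<and> VS \<subseteq> V \<and>
        graded_subspace scale Lg WS \<and> WS \<subseteq> W \<and> WS \<noteq> {0} \<and>
        WS = module.span scale (e ` J) \<and>
        VS \<inter> WS = {0} \<and> S = {v + w | v w. v \<in> VS \<and> w \<in> WS})"

definition minimal ::
  "('f::field \<Rightarrow> 'v::ab_group_add \<Rightarrow> 'v) \<Rightarrow> ('g \<Rightarrow> 'v set) \<Rightarrow> nat \<Rightarrow> ('v list \<Rightarrow> 'v)
    \<Rightarrow> 'v set \<Rightarrow> 'v set \<Rightarrow> ('i \<Rightarrow> 'v) \<Rightarrow> bool" where
  "minimal scale Lg n mul V W e \<longleftrightarrow>
     (\<forall>S. S \<noteq> {0} \<and> gLt_ideal scale Lg n mul S \<and> inherited_basis_ideal scale Lg V W e S \<longrightarrow> S = UNIV)"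

end

theory Submission
  imports Defs
begin

text \<open>
  If all indices are connected, a nonzero ideal \<open>T\<close> with inherited basis contains some \<open>e\<^sub>i\<close>.
  By \<open>\<mu>\<close>-quasi-multiplicativity every index produced by \<open>\<mu>\<close> from \<open>j\<close> is realised by a
  bracket having \<open>e\<^sub>j\<close> as an argument, so each step of \<open>\<phi>\<close> stays inside \<open>T\<close>; hence \<open>T\<close>
  contains every \<open>e\<^sub>j\<close> and thus \<open>W\<close>, and by tightness also \<open>V\<close>.

  Conversely, fix \<open>i\<close> and let \<open>C\<close> be the set of indices connected to \<open>i\<close>, which is closed
  under steps of \<open>\<phi>\<close>. Let \<open>S\<close> be spanned by the \<open>e\<^sub>c\<close> with \<open>c \<in> C\<close> and by the brackets of
  basis vectors from \<open>C\<close> that lie in \<open>V\<close>. A bracket of basis vectors and elements of \<open>V\<close> with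
  some argument \<open>e\<^sub>c\<close>, \<open>c \<in> C\<close>, is either a multiple of some \<open>e\<^sub>j\<close>, with \<open>j\<close> reached from
  \<open>c\<close>, or lies in \<open>V\<close>, with all its basis arguments reached from the bar of \<open>c\<close>;
  either way it lies in \<open>S\<close>. Brackets with an argument from the \<open>V\<close>-part of \<open>S\<close> are rewritten
  by the gLt identity into brackets of the first kind. So \<open>S\<close> is an ideal with inherited basis,
  minimality gives \<open>S = \<frak>L\<close>, and linear independence of the basis gives \<open>C = I\<close>.
\<close>

lemma perm_list_eq_permute_list: "perm_list = permute_list"
  by (intro ext) (simp add: perm_list_def permute_list_def)

lemma perm_list_id [simp]: "perm_list id xs = xs"
  by (simp add: perm_list_def map_nth)

lemma mset_Cons_remove1: "x \<in> set xs \<Longrightarrow> mset (x # remove1 x xs) = mset xs"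
  by simp

lemma in_set_take_drop_Suc:
  assumes "y \<in> set (take k xs @ drop (Suc k) xs)"
  obtains r where "r < length xs" "r \<noteq> k" "xs ! r = y"
proof -
  consider (take) "y \<in> set (take k xs)" | (drop) "y \<in> set (drop (Suc k) xs)"
    using assms by auto
  then show ?thesis
  proof cases
    case take
    then obtain r where "r < length (take k xs)" "take k xs ! r = y"
      by (auto simp: in_set_conv_nth)
    then show ?thesis
      using that[of r] by simp
  next
    case drop
    then obtain r where "r < length (drop (Suc k) xs)" "drop (Suc k) xs ! r = y"
      by (auto simp: in_set_conv_nth)
    then show ?thesis
      using that[of "Suc k + r"] by simp
  qed
qed

lemma ex_mset_eq_Ix_replicate_Vx: "\<exists>is. mset L = mset (map Ix is @ replicate (count (mset L) Vx) Vx)"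
proof (induction L)
  case (Cons x L)
  then obtain "is" where "is": "mset L = mset (map Ix is @ replicate (count (mset L) Vx) Vx)"
    by blast
  show ?case
  proof (cases x)
    case (Ix i)
    then show ?thesis
      using "is" by (intro exI[of _ "i # is"]) simp
  next
    case Vx
    then show ?thesis
      using "is" by (intro exI[of _ "is"]) simp
  qed
qed simp

lemma ex_map_Ix_if_Vx_notin:
  assumes "Vx \<notin> set L"
  obtains js where "L = map Ix js"
proof -
  have "\<exists>i. y = Ix i" if "y \<in> set L" for y
    by (cases y) (use that assms in auto)
  then show ?thesis
    using that ex_map_conv[of L Ix] by blast
qed

section \<open>Bracket sets\<close>

context vector_space
begin

lemma mul_in_bracket_set_id:
  assumes "length xs = n" "\<And>r. r < n \<Longrightarrow> xs ! r \<in> As ! r"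
  shows "mul xs \<in> bracket_set scale n mul As id"
  unfolding bracket_set_def using assms by (intro span_base) (auto intro!: exI[of _ xs])

lemma bracket_set_subset:
  assumes "subspace T"
    and "\<And>xs. length xs = n \<Longrightarrow> \<forall>r<n. xs ! r \<in> As ! r \<Longrightarrow> mul (perm_list s xs) \<in> T"
  shows "bracket_set scale n mul As s \<subseteq> T"
  unfolding bracket_set_def using assms by (intro span_minimal) blast+

lemma bracket_set_mono:
  assumes "\<And>r. r < n \<Longrightarrow> As ! r \<subseteq> Bs ! r"
  shows "bracket_set scale n mul As s \<subseteq> bracket_set scale n mul Bs s"
  unfolding bracket_set_def using assms by (intro span_mono) blast

lemma bracket_set_singletons:
  assumes "length ys = n"
  shows "bracket_set scale n mul (map (\<lambda>y. {y}) ys) id = span {mul ys}"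
proof -
  have "xs = ys" if "length xs = n" "\<forall>r<n. xs ! r \<in> map (\<lambda>y. {y}) ys ! r" for xs
    using that assms by (intro nth_equalityI) auto
  then show ?thesis
    unfolding bracket_set_def using assms by (intro arg_cong[where f = span]) auto
qed

lemma bracket_set_eq_id:
  assumes s: "s permutes {..<n}" and len: "length As = n"
  shows "bracket_set scale n mul As s = bracket_set scale n mul (permute_list s As) id"
proof -
  have entries: "(\<forall>r<n. permute_list s xs ! r \<in> permute_list s As ! r) \<longleftrightarrow> (\<forall>r<n. xs ! r \<in> As ! r)"
    if xs: "length xs = n" for xs :: "'b list"
  proof -
    have "s permutes {..<length xs}" "s permutes {..<length As}"
      using s xs len by simp_all
    then have "(\<forall>r<n. permute_list s xs ! r \<in> permute_list s As ! r) \<longleftrightarrow> (\<forall>r\<in>s ` {..<n}. xs ! r \<in> As ! r)"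
      using xs len by (auto simp: permute_list_nth)
    then show ?thesis
      by (auto simp: permutes_image[OF s])
  qed
  have "{mul (perm_list s xs) | xs. length xs = n \<and> (\<forall>r<n. xs ! r \<in> As ! r)}
      = {mul (perm_list id ys) | ys. length ys = n \<and> (\<forall>r<n. ys ! r \<in> permute_list s As ! r)}"
  proof (intro equalityI subsetI)
    fix v assume "v \<in> {mul (perm_list s xs) | xs. length xs = n \<and> (\<forall>r<n. xs ! r \<in> As ! r)}"
    then obtain xs where "v = mul (permute_list s xs)" "length xs = n" "\<forall>r<n. xs ! r \<in> As ! r"
      by (auto simp: perm_list_eq_permute_list)
    then show "v \<in> {mul (perm_list id ys) | ys. length ys = n \<and> (\<forall>r<n. ys ! r \<in> permute_list s As ! r)}"
      using entries by (intro CollectI exI[of _ "permute_list s xs"]) simp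
  next
    fix v assume "v \<in> {mul (perm_list id ys) | ys. length ys = n \<and> (\<forall>r<n. ys ! r \<in> permute_list s As ! r)}"
    then obtain ys where ys: "v = mul ys" "length ys = n" "\<forall>r<n. ys ! r \<in> permute_list s As ! r"
      by auto
    have "permute_list s (permute_list (inv s) ys) = ys"
      using s ys(2) by (simp flip: permute_list_compose add: permutes_inv_o(2))
    then show "v \<in> {mul (perm_list s xs) | xs. length xs = n \<and> (\<forall>r<n. xs ! r \<in> As ! r)}"
      using entries[of "permute_list (inv s) ys"] ys
      by (intro CollectI exI[of _ "permute_list (inv s) ys"]) (simp add: perm_list_eq_permute_list)
  qed
  then show ?thesis
    unfolding bracket_set_def by simp
qed

lemma bracket_set_reorder:
  assumes "mset Bs = mset As" "length As = n"
  obtains s where "s permutes {..<n}" "bracket_set scale n mul Bs s = bracket_set scale n mul As id"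
proof -
  obtain s where s: "s permutes {..<length Bs}" "permute_list s Bs = As"
    using mset_eq_permutation[of As Bs] assms(1) by metis
  have "length Bs = n"
    using assms by (metis mset_eq_length)
  then show ?thesis
    using that s bracket_set_eq_id[of s n Bs] by simp
qed

lemma graded_subspace_span:
  assumes "\<And>x. x \<in> X \<Longrightarrow> \<exists>g. x \<in> Lg g"
  shows "graded_subspace scale Lg (span X)"
  unfolding graded_subspace_def
proof
  have "X \<subseteq> (\<Union>g. span X \<inter> Lg g)"
  proof
    fix x assume x: "x \<in> X"
    then obtain g where "x \<in> Lg g"
      using assms by blast
    then show "x \<in> (\<Union>g. span X \<inter> Lg g)"
      using x span_base by blast
  qed
  then have "span X \<subseteq> span (\<Union>g. span X \<inter> Lg g)"
    by (rule span_mono)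
  moreover have "span (\<Union>g. span X \<inter> Lg g) \<subseteq> span X"
    by (rule span_minimal) auto
  ultimately show "span X = span (\<Union>g. span X \<inter> Lg g)"
    by blast
qed simp

lemma color_gLt_identity_in_subspace:
  assumes gLt: "color_gLt_algebra scale Lg eps n mul alpha" and T: "subspace T" and k: "k < n"
    and xs: "length xs = n" "\<forall>x\<in>set xs. \<exists>g. x \<in> Lg g"
    and ys: "length ys = n - 1" "\<forall>y\<in>set ys. \<exists>g. y \<in> Lg g"
    and terms: "\<And>i j s1 s2. i < n \<Longrightarrow> j < n \<Longrightarrow> s1 permutes {..<n} \<Longrightarrow> s2 permutes {..<n - 1} \<Longrightarrow>
      (let xs' = perm_list s1 xs; ys' = perm_list s2 ys in
       mul (take i xs' @ [mul (take j ys' @ [xs' ! i] @ drop j ys')] @ drop (Suc i) xs')) \<in> T"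
  shows "mul (take k ys @ [mul xs] @ drop k ys) \<in> T"
proof -
  define dxs where "dxs = map (\<lambda>x. SOME g. x \<in> Lg g) xs"
  define dys where "dys = map (\<lambda>y. SOME g. y \<in> Lg g) ys"
  have degrees: "\<forall>t<n. xs ! t \<in> Lg (dxs ! t)" "\<forall>t<n - 1. ys ! t \<in> Lg (dys ! t)"
    using xs ys unfolding dxs_def dys_def by (auto intro: someI_ex)
  have lengths: "length dxs = n" "length dys = n - 1"
    using xs ys unfolding dxs_def dys_def by simp_all
  note identity = gLt[unfolded color_gLt_algebra_def, THEN conjunct2, THEN conjunct2, THEN conjunct2,
      rule_format, OF k, of xs dxs ys dys]
  show ?thesis
    by (subst identity) (use xs(1) ys(1) lengths degrees in simp,
        (intro subspace_sum[OF T] subspace_scale[OF T] terms; simp))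
qed

end

section \<open>Algebras with a quasi-multiplicative basis\<close>

locale quasi_mult_algebra =
  fixes scale :: "'f::field \<Rightarrow> 'v::ab_group_add \<Rightarrow> 'v"
    and Lg :: "'g::ab_group_add \<Rightarrow> 'v set"
    and n :: nat
    and mul :: "'v list \<Rightarrow> 'v"
    and V W :: "'v set"
    and e :: "'i \<Rightarrow> 'v"
  assumes graded_algebra: "graded_nary_algebra scale Lg n mul"
    and arity: "2 \<le> n"
    and quasi_mult: "quasi_mult_basis scale Lg n mul V W e"
begin

sublocale vector_space scale
  using graded_algebra unfolding graded_nary_algebra_def graded_space_def by blast

lemma mul_linear: "length xs = n \<Longrightarrow> r < n \<Longrightarrow> Vector_Spaces.linear scale scale (\<lambda>x. mul (xs[r := x]))"
  using graded_algebra unfolding graded_nary_algebra_def by blast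

lemma mul_homogeneous:
  assumes "length xs = n" "\<forall>x\<in>set xs. \<exists>g. x \<in> Lg g"
  shows "\<exists>g. mul xs \<in> Lg g"
proof -
  define gs where "gs = map (\<lambda>x. SOME g. x \<in> Lg g) xs"
  have "\<forall>r<n. xs ! r \<in> Lg (gs ! r)"
    using assms unfolding gs_def by (auto intro: someI_ex)
  then have "mul xs \<in> Lg (sum_list gs)"
    using graded_algebra assms(1) unfolding graded_nary_algebra_def gs_def by simp
  then show ?thesis ..
qed

lemma V_subspace: "subspace V"
  and V_graded: "V = span (\<Union>g. V \<inter> Lg g)"
  and W_subspace: "subspace W"
  using quasi_mult unfolding quasi_mult_basis_def graded_subspace_def by blast+

lemma V_inter_W: "V \<inter> W = {0}"
  and V_plus_W: "{v + w | v w. v \<in> V \<and> w \<in> W} = UNIV"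
  and inj_e: "inj e"
  and independent_e: "\<not> dependent (range e)"
  and span_e: "span (range e) = W"
  and e_homogeneous: "\<exists>g. e i \<in> Lg g"
  using quasi_mult unfolding quasi_mult_basis_def by blast+

lemma decompose_V_W:
  obtains v w where "x = v + w" "v \<in> V" "w \<in> W"
  using V_plus_W by blast

lemma basis_product_line_or_V:
  "length is = n \<Longrightarrow> (\<exists>j. mul (map e is) \<in> line scale (e j)) \<or> mul (map e is) \<in> V"
  using quasi_mult unfolding quasi_mult_basis_def by blast

lemma mixed_bracket_set_line:
  "0 < k \<Longrightarrow> k < n \<Longrightarrow> length is = k \<Longrightarrow> s permutes {..<n} \<Longrightarrow>
    \<exists>j. bracket_set scale n mul (map (\<lambda>i. {e i}) is @ replicate (n - k) V) s \<subseteq> line scale (e j)"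
  using quasi_mult unfolding quasi_mult_basis_def by blast

lemma e_nonzero: "e i \<noteq> 0"
  using independent_e dependent_zero by (metis rangeI)

lemma e_in_W: "e i \<in> W"
  using span_e span_base by blast

lemma e_notin_V: "e i \<notin> V"
  using V_inter_W e_in_W e_nonzero by blast

lemma line_eq_span: "line scale x = span {x}"
  by (simp add: line_def span_singleton)

lemma line_subset_W: "line scale (e i) \<subseteq> W"
  unfolding line_eq_span using span_e span_mono[of "{e i}" "range e"] by blast

lemma span_e_and_homogeneous_V: "span (range e \<union> (\<Union>g. V \<inter> Lg g)) = UNIV"
proof -
  let ?H = "range e \<union> (\<Union>g. V \<inter> Lg g)"
  have "V \<subseteq> span ?H" "W \<subseteq> span ?H"
    using V_graded span_e span_mono[of "\<Union>g. V \<inter> Lg g" ?H] span_mono[of "range e" ?H] by auto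
  show ?thesis
  proof (intro equalityI subsetI)
    fix x :: 'v
    obtain v w where "x = v + w" "v \<in> V" "w \<in> W"
      by (rule decompose_V_W)
    then show "x \<in> span ?H"
      using \<open>V \<subseteq> span ?H\<close> \<open>W \<subseteq> span ?H\<close> span_add by blast
  qed simp
qed

lemma mul_update_in_subspace:
  assumes xs: "length xs = n" "p < n" and T: "subspace T"
    and gens: "\<And>a. a \<in> X \<Longrightarrow> mul (xs[p := a]) \<in> T" and q: "q \<in> span X"
  shows "mul (xs[p := q]) \<in> T"
proof -
  interpret slot: Vector_Spaces.linear scale scale "\<lambda>x. mul (xs[p := x])"
    using mul_linear[OF xs] .
  have "span X \<subseteq> (\<lambda>x. mul (xs[p := x])) -` T"
    using gens T by (intro span_minimal slot.subspace_vimage) auto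
  then show ?thesis
    using q by blast
qed

lemma mul_in_subspace_multilinear:
  assumes T: "subspace T"
    and gens: "\<And>zs. length zs = n \<Longrightarrow> \<forall>r<n. zs ! r \<in> A r \<Longrightarrow> mul zs \<in> T"
    and xs: "length xs = n" "\<forall>r<n. xs ! r \<in> span (A r)"
  shows "mul xs \<in> T"
proof -
  have "mul zs \<in> T" if "length zs = n" "\<forall>r<n. zs ! r \<in> (if r < m then span (A r) else A r)" for m zs
    using that
  proof (induction m arbitrary: zs)
    case 0
    then show ?case
      using gens by simp
  next
    case (Suc m)
    show ?case
    proof (cases "m < n")
      case False
      then show ?thesis
        using Suc by (intro Suc.IH) auto
    next
      case True
      have "mul (zs[m := a]) \<in> T" if "a \<in> A m" for a
        using Suc.prems that by (intro Suc.IH) (auto simp: nth_list_update)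
      moreover have "zs ! m \<in> span (A m)"
        using Suc.prems True by auto
      ultimately have "mul (zs[m := zs ! m]) \<in> T"
        by (rule mul_update_in_subspace[OF Suc.prems(1) True T])
      then show ?thesis
        by simp
    qed
  qed
  from this[of xs n] show ?thesis
    using xs by simp
qed

lemma labelled_bracket_set_line_if_Vx:
  assumes L: "length L = n" and c: "Ix c \<in> set L" and v: "Vx \<in> set L"
  shows "\<exists>j. bracket_set scale n mul (map (u_set V e) L) id \<subseteq> line scale (e j)"
proof -
  define m where "m = count (mset L) Vx"
  obtain "is" where "is": "mset L = mset (map Ix is @ replicate m Vx)"
    using ex_mset_eq_Ix_replicate_Vx[of L] unfolding m_def by blast
  have "length is + m = n"
    using L mset_eq_length[OF "is"] by simp
  moreover have "0 < m"
    using v unfolding m_def by simp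
  moreover have "Ix c \<in> set (map Ix is @ replicate m Vx)"
    using c "is" by (metis set_mset_mset)
  then have "0 < length is"
    by auto
  ultimately have len: "0 < length is" "length is < n" "m = n - length is"
    by auto
  have "map (u_set V e) (map Ix is @ replicate m Vx) = map (\<lambda>i. {e i}) is @ replicate (n - length is) V"
    using len(3) by simp
  then have "mset (map (\<lambda>i. {e i}) is @ replicate (n - length is) V) = mset (map (u_set V e) L)"
    using "is" by (metis mset_map)
  then obtain s where "s permutes {..<n}" "bracket_set scale n mul (map (\<lambda>i. {e i}) is @ replicate (n - length is) V) s
      = bracket_set scale n mul (map (u_set V e) L) id"
    by (rule bracket_set_reorder) (simp add: L)
  then show ?thesis
    using mixed_bracket_set_line[OF len(1,2) refl] by metis
qed

lemma basis_bracket_set_line_or_V: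
  assumes "length js = n"
  shows "(\<exists>j. bracket_set scale n mul (map (u_set V e) (map Ix js)) id \<subseteq> line scale (e j)) \<or>
    bracket_set scale n mul (map (u_set V e) (map Ix js)) id \<subseteq> V"
proof -
  have B: "bracket_set scale n mul (map (u_set V e) (map Ix js)) id = span {mul (map e js)}"
    using bracket_set_singletons[of "map e js" n mul] assms by (simp add: comp_def)
  from basis_product_line_or_V[OF assms] show ?thesis
  proof (elim disjE exE)
    fix j assume "mul (map e js) \<in> line scale (e j)"
    then have "span {mul (map e js)} \<subseteq> line scale (e j)"
      unfolding line_eq_span by (simp add: span_minimal)
    then show ?thesis
      unfolding B by blast
  next
    assume "mul (map e js) \<in> V"
    then show ?thesis
      unfolding B using V_subspace by (simp add: span_minimal)
  qed
qed

lemma labelled_bracket_set_line_or_V: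
  assumes L: "length L = n" and c: "Ix c \<in> set L"
  shows "(\<exists>j. bracket_set scale n mul (map (u_set V e) L) id \<subseteq> line scale (e j)) \<or>
    (\<exists>js. L = map Ix js \<and> bracket_set scale n mul (map (u_set V e) L) id \<subseteq> V)"
proof (cases "Vx \<in> set L")
  case True
  then show ?thesis
    using labelled_bracket_set_line_if_Vx[OF L c] by blast
next
  case False
  then obtain js where "L = map Ix js"
    using ex_map_Ix_if_Vx_notin by blast
  then show ?thesis
    using basis_bracket_set_line_or_V[of js] L by auto
qed

end

section \<open>Connectedness\<close>

fun unbar :: "'a br \<Rightarrow> 'a" where
  "unbar (Pl a) = a"
| "unbar (Br a) = a"

lemma phi_iter_snoc:
  "phi_iter scale n mul V e J (Xs @ [X]) = phi scale n mul V e (phi_iter scale n mul V e J Xs) X"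
  by (induction Xs arbitrary: J) auto

lemma phi_mono: "J \<subseteq> J' \<Longrightarrow> J \<noteq> {} \<Longrightarrow> phi scale n mul V e J X \<subseteq> phi scale n mul V e J' X"
  unfolding phi_def Let_def by auto

lemma Br_in_phi_if_Pl: "Pl c \<in> phi scale n mul V e J X \<Longrightarrow> Br c \<in> phi scale n mul V e J X"
  unfolding phi_def Let_def by (auto split: if_splits)

lemma Br_in_phi_iter_if_Pl:
  "Xs \<noteq> [] \<Longrightarrow> Pl c \<in> phi_iter scale n mul V e J Xs \<Longrightarrow> Br c \<in> phi_iter scale n mul V e J Xs"
  by (induction Xs rule: rev_induct) (auto simp: phi_iter_snoc intro: Br_in_phi_if_Pl)

lemma Pl_in_phi_if_in_mu: "Ix r \<in> mu scale n mul V e (br_ix j) X \<Longrightarrow> Pl r \<in> phi scale n mul V e {j} X"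
  unfolding phi_def Let_def by auto

lemma connected_phi_step:
  assumes "connected scale n mul V e i c" "tuple_ok n X" "j \<in> {Pl c, Br c}"
    and "Pl r \<in> phi scale n mul V e {j} X"
  shows "connected scale n mul V e i r"
proof (cases "i = c")
  case True
  then show ?thesis
    using assms(2-4) unfolding connected_def by (intro disjI2 exI[of _ "[X]"] exI[of _ j]) auto
next
  case False
  then obtain Xs i' where Xs: "Xs \<noteq> []" "\<forall>X\<in>set Xs. tuple_ok n X" "i' \<in> {Pl i, Br i}"
    "\<forall>s. 1 \<le> s \<and> s < length Xs \<longrightarrow> phi_iter scale n mul V e {i'} (take s Xs) \<noteq> {}"
    "Pl c \<in> phi_iter scale n mul V e {i'} Xs"
    using assms(1) False unfolding connected_def by auto
  have "j \<in> phi_iter scale n mul V e {i'} Xs"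
    using assms(3) Xs(5) Br_in_phi_iter_if_Pl[OF Xs(1,5)] by blast
  then have "phi scale n mul V e {j} X \<subseteq> phi_iter scale n mul V e {i'} (Xs @ [X])"
    unfolding phi_iter_snoc by (intro phi_mono) auto
  then have "Pl r \<in> phi_iter scale n mul V e {i'} (Xs @ [X])"
    using assms(4) by blast
  moreover have "phi_iter scale n mul V e {i'} (take s (Xs @ [X])) \<noteq> {}"
    if "1 \<le> s" "s < length (Xs @ [X])" for s
  proof (cases "s < length Xs")
    case True
    then show ?thesis
      using Xs(4) that by simp
  next
    case False
    then have "s = length Xs"
      using that by simp
    then show ?thesis
      using Xs(5) by auto
  qed
  ultimately show ?thesis
    unfolding connected_def using Xs(1-3) assms(2) by (intro disjI2 exI[of _ "Xs @ [X]"] exI[of _ i']) auto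
qed

context quasi_mult_algebra
begin

lemma ideal_subspace: "gLt_ideal scale Lg n mul T \<Longrightarrow> subspace T"
  unfolding gLt_ideal_def graded_subspace_def by blast

lemma ideal_bracket_closed:
  "gLt_ideal scale Lg n mul T \<Longrightarrow> s permutes {..<n} \<Longrightarrow>
    bracket_set scale n mul (T # replicate (n - 1) UNIV) s \<subseteq> T"
  unfolding gLt_ideal_def by blast

lemma ideal_phi_closed:
  assumes mu: "mu_quasi_mult scale n mul V e" and T: "gLt_ideal scale Lg n mul T"
    and J: "\<forall>j\<in>J. e (unbar j) \<in> T" and X: "tuple_ok n X" and x: "x \<in> phi scale n mul V e J X"
  shows "e (unbar x) \<in> T"
proof -
  obtain j where j: "j \<in> J" "Ix (unbar x) \<in> mu scale n mul V e (br_ix j) X"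
    using x unfolding phi_def Let_def by (auto split: if_splits)
  obtain s where s: "s permutes {..<n}"
    "e (unbar x) \<in> bracket_set scale n mul (map (w_set V e) (br_ix j # unbar_list X)) s"
    using mu X j(2) unfolding mu_quasi_mult_def by blast
  have "length (unbar_list X) = n - 1"
    using X by (cases X) auto
  moreover have "w_set V e (br_ix j) = {e (unbar j)}"
    by (cases j) auto
  ultimately have "bracket_set scale n mul (map (w_set V e) (br_ix j # unbar_list X)) s
      \<subseteq> bracket_set scale n mul (T # replicate (n - 1) UNIV) s"
    using J j(1) by (intro bracket_set_mono) (auto simp: nth_Cons split: nat.split)
  then show ?thesis
    using s ideal_bracket_closed[OF T s(1)] by blast
qed

lemma ideal_phi_iter_closed:
  assumes "mu_quasi_mult scale n mul V e" "gLt_ideal scale Lg n mul T"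
  shows "\<forall>j\<in>J. e (unbar j) \<in> T \<Longrightarrow> \<forall>X\<in>set Xs. tuple_ok n X \<Longrightarrow>
    \<forall>x\<in>phi_iter scale n mul V e J Xs. e (unbar x) \<in> T"
proof (induction Xs arbitrary: J)
  case (Cons X Xs)
  have "\<forall>x\<in>phi scale n mul V e J X. e (unbar x) \<in> T"
    using ideal_phi_closed[OF assms] Cons.prems by auto
  then show ?case
    using Cons.IH Cons.prems(2) by simp
qed simp

lemma ideal_contains_connected:
  assumes "mu_quasi_mult scale n mul V e" "gLt_ideal scale Lg n mul T"
    and "e i \<in> T" "connected scale n mul V e i j"
  shows "e j \<in> T"
proof (cases "i = j")
  case False
  then obtain Xs i' where Xs: "\<forall>X\<in>set Xs. tuple_ok n X" "i' \<in> {Pl i, Br i}"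
    "Pl j \<in> phi_iter scale n mul V e {i'} Xs"
    using assms(4) unfolding connected_def by blast
  have "\<forall>x\<in>{i'}. e (unbar x) \<in> T"
    using assms(3) Xs(2) by auto
  then have "\<forall>x\<in>phi_iter scale n mul V e {i'} Xs. e (unbar x) \<in> T"
    using ideal_phi_iter_closed[OF assms(1,2)] Xs(1) by blast
  then show ?thesis
    using Xs(3) by fastforce
qed (use assms(3) in simp)

lemma ideal_contains_basis_products:
  assumes T: "gLt_ideal scale Lg n mul T" and e: "\<And>j. e j \<in> T" and "length is = n"
  shows "mul (map e is) \<in> T"
proof -
  have "mul (map e is) \<in> bracket_set scale n mul (T # replicate (n - 1) UNIV) id"
    using assms(3) e by (intro mul_in_bracket_set_id) (auto simp: nth_Cons split: nat.split)
  then show ?thesis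
    using ideal_bracket_closed[OF T permutes_id] by blast
qed

lemma V_subset_ideal_if_tight:
  assumes tight: "tight scale n mul V e" and T: "gLt_ideal scale Lg n mul T" and e: "\<And>j. e j \<in> T"
  shows "V \<subseteq> T"
proof (cases "V = {0}")
  case True
  then show ?thesis
    using subspace_0[OF ideal_subspace[OF T]] by simp
next
  case False
  then have V_eq: "V = span {mul (map e (i # is)) | i is. length is = n - 1 \<and>
      mu scale n mul V e (Pl (Ix i)) (Pl (map Ix is)) = {Vx}}"
    using tight unfolding tight_def by blast
  have "{mul (map e (i # is)) | i is. length is = n - 1 \<and>
      mu scale n mul V e (Pl (Ix i)) (Pl (map Ix is)) = {Vx}} \<subseteq> T"
  proof (rule subsetI, elim CollectE exE conjE)
    fix x i "is" assume "x = mul (map e (i # is))" "length is = n - 1"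
    then show "x \<in> T"
      using ideal_contains_basis_products[OF T e, of "i # is"] arity by simp
  qed
  then show ?thesis
    by (subst V_eq) (rule span_minimal[OF _ ideal_subspace[OF T]])
qed

lemma ideal_eq_UNIV_if_basis:
  assumes tight: "tight scale n mul V e" and T: "gLt_ideal scale Lg n mul T" and e: "\<And>j. e j \<in> T"
  shows "T = UNIV"
proof -
  have "V \<subseteq> T"
    using V_subset_ideal_if_tight[OF assms] .
  moreover have "W \<subseteq> T"
    using span_e span_minimal[OF _ ideal_subspace[OF T]] e by blast
  moreover have "x \<in> T" if "V \<subseteq> T" "W \<subseteq> T" for x
  proof -
    obtain v w where "x = v + w" "v \<in> V" "w \<in> W"
      by (rule decompose_V_W)
    then show ?thesis
      using that subspace_add[OF ideal_subspace[OF T]] by blast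
  qed
  ultimately show ?thesis
    by blast
qed

lemma minimal_if_connected:
  assumes "mu_quasi_mult scale n mul V e" "tight scale n mul V e"
    and connected: "\<forall>i j. connected scale n mul V e i j"
  shows "minimal scale Lg n mul V W e"
  unfolding minimal_def
proof (intro allI impI, elim conjE)
  fix T assume T: "gLt_ideal scale Lg n mul T" and "inherited_basis_ideal scale Lg V W e T"
  then obtain VS WS J where VS: "graded_subspace scale Lg VS" and WS: "WS \<noteq> {0}" "WS = span (e ` J)"
    and T_eq: "T = {v + w | v w. v \<in> VS \<and> w \<in> WS}"
    unfolding inherited_basis_ideal_def by blast
  have "J \<noteq> {}"
    using WS by auto
  then obtain i where "i \<in> J"
    by blast
  moreover have "0 \<in> VS"
    using VS subspace_0 unfolding graded_subspace_def by blast
  ultimately have "0 + e i \<in> T"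
    unfolding T_eq WS(2) by (blast intro: span_base)
  then have "e i \<in> T"
    by simp
  then have "e j \<in> T" for j
    using ideal_contains_connected[OF assms(1) T] connected by blast
  then show "T = UNIV"
    using ideal_eq_UNIV_if_basis[OF assms(2) T] by blast
qed

end

section \<open>The ideal spanned by a \<open>\<phi>\<close>-closed set of indices\<close>

locale phi_closed_index_set = quasi_mult_algebra scale Lg n mul V W e
  for scale :: "'f::field \<Rightarrow> 'v::ab_group_add \<Rightarrow> 'v" and Lg :: "'g::ab_group_add \<Rightarrow> 'v set"
    and n mul V W and e :: "'i \<Rightarrow> 'v" +
  fixes C :: "'i set"
  assumes phi_closed: "\<And>c X j r. c \<in> C \<Longrightarrow> tuple_ok n X \<Longrightarrow> j \<in> {Pl c, Br c} \<Longrightarrow>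
    Pl r \<in> phi scale n mul V e {j} X \<Longrightarrow> r \<in> C"
begin

definition V_products :: "'v set" where
  "V_products = {mul (map e js) | js. length js = n \<and> set js \<subseteq> C \<and> mul (map e js) \<in> V}"

definition C_ideal :: "'v set" where
  "C_ideal = span (e ` C \<union> V_products)"

lemma V_products_subset_V: "V_products \<subseteq> V"
  unfolding V_products_def by blast

lemma C_ideal_subspace: "subspace C_ideal"
  unfolding C_ideal_def by simp

lemma line_subset_C_ideal: "c \<in> C \<Longrightarrow> line scale (e c) \<subseteq> C_ideal"
  unfolding C_ideal_def line_eq_span by (intro span_mono) blast

text \<open>Putting the label of \<open>c\<close> first realises the bracket as a value of \<open>a\<close>, so \<open>j \<in> \<mu>(c, rest)\<close>:
  one step of \<open>\<phi>\<close> from \<open>c\<close> reaches \<open>j\<close>.\<close>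
lemma line_index_in_C:
  assumes L: "length L = n" and c: "Ix c \<in> set L" "c \<in> C"
    and B: "bracket_set scale n mul (map (u_set V e) L) id \<noteq> {0}"
      "bracket_set scale n mul (map (u_set V e) L) id \<subseteq> line scale (e j)"
  shows "j \<in> C"
proof -
  define rest where "rest = remove1 (Ix c) L"
  have "mset (Ix c # rest) = mset L"
    using c(1) unfolding rest_def by (rule mset_Cons_remove1)
  then have "mset (map (u_set V e) (Ix c # rest)) = mset (map (u_set V e) L)"
    by (metis mset_map)
  then obtain s where s: "s permutes {..<n}" "bracket_set scale n mul (map (u_set V e) (Ix c # rest)) s
      = bracket_set scale n mul (map (u_set V e) L) id"
    using bracket_set_reorder L by (metis length_map)
  then have "Ix j \<in> a_map scale n mul V e s (Ix c # rest)"
    using B unfolding a_map_def Let_def by auto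
  then have "Ix j \<in> mu scale n mul V e (br_ix (Pl c)) (Pl rest)"
    using s(1) by auto
  then have "Pl j \<in> phi scale n mul V e {Pl c} (Pl rest)"
    by (rule Pl_in_phi_if_in_mu)
  moreover have "tuple_ok n (Pl rest)"
    using L c(1) by (simp add: rest_def length_remove1)
  ultimately show ?thesis
    using phi_closed c(2) by blast
qed

text \<open>Here \<open>v\<close> is the only value of \<open>a\<close> on the labels \<open>(d, c, rest)\<close>, so \<open>d \<in> b(v, c, rest)\<close>,
  which is part of \<open>\<mu>\<close> at the bar of \<open>c\<close> and \<open>(v, rest)\<close>: one step of \<open>\<phi>\<close> from the bar of \<open>c\<close>
  reaches \<open>d\<close>.\<close>
lemma V_index_in_C:
  assumes L: "length L = n" and c: "Ix c \<in> set L" "c \<in> C" and d: "Ix d \<in> set L"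
    and B: "bracket_set scale n mul (map (u_set V e) L) id \<noteq> {0}"
      "bracket_set scale n mul (map (u_set V e) L) id \<subseteq> V"
  shows "d \<in> C"
proof (cases "d = c")
  case False
  define rest where "rest = remove1 (Ix d) (remove1 (Ix c) L)"
  have "Ix d \<in> set (remove1 (Ix c) L)"
    using d False by (simp add: in_set_remove1)
  then have "mset (Ix d # rest) = mset (remove1 (Ix c) L)"
    unfolding rest_def by (rule mset_Cons_remove1)
  moreover have "mset (Ix c # remove1 (Ix c) L) = mset L"
    using c(1) by (rule mset_Cons_remove1)
  ultimately have "mset (Ix d # Ix c # rest) = mset L"
    by (metis add_mset_commute mset.simps(2))
  then have lengths: "length (Vx # rest) = n - 1"
    and "mset (map (u_set V e) (Ix d # Ix c # rest)) = mset (map (u_set V e) L)"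
    using L by (metis length_Cons mset_eq_length diff_Suc_1, metis mset_map)
  then obtain s where s: "s permutes {..<n}" "bracket_set scale n mul (map (u_set V e) (Ix d # Ix c # rest)) s
      = bracket_set scale n mul (map (u_set V e) L) id"
    using bracket_set_reorder L by (metis length_map)
  have "0 \<in> bracket_set scale n mul (map (u_set V e) L) id"
    unfolding bracket_set_def by (rule span_zero)
  then have "\<not> bracket_set scale n mul (map (u_set V e) L) id \<subseteq> line scale (e r)" for r
    using B line_subset_W V_inter_W by blast
  then have "a_map scale n mul V e s (Ix d # Ix c # rest) = {Vx}"
    using s B unfolding a_map_def Let_def by auto
  then have "Ix d \<in> b_map scale n mul V e s Vx (Ix c # rest)"
    unfolding b_map_def by simp
  then have "Ix d \<in> mu scale n mul V e (br_ix (Br c)) (Pl (Vx # rest))"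
    using s(1) arity by (auto intro!: bexI[of _ 0])
  then have "Pl d \<in> phi scale n mul V e {Br c} (Pl (Vx # rest))"
    by (rule Pl_in_phi_if_in_mu)
  then show ?thesis
    using phi_closed[of c "Pl (Vx # rest)" "Br c" d] c(2) lengths by simp
qed (use c in simp)

lemma labelled_mul_in_C_ideal:
  assumes L: "length L = n" and xs: "length xs = n" "\<And>t. t < n \<Longrightarrow> xs ! t \<in> u_set V e (L ! t)"
    and c: "Ix c \<in> set L" "c \<in> C"
  shows "mul xs \<in> C_ideal"
proof (cases "mul xs = 0")
  case True
  then show ?thesis
    using C_ideal_subspace subspace_0 by simp
next
  case False
  let ?B = "bracket_set scale n mul (map (u_set V e) L) id"
  have in_B: "mul xs \<in> ?B"
    using xs L by (intro mul_in_bracket_set_id) auto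
  then have B0: "?B \<noteq> {0}"
    using False by blast
  from labelled_bracket_set_line_or_V[OF L c(1)] show ?thesis
  proof (elim disjE exE conjE)
    fix j assume "?B \<subseteq> line scale (e j)"
    then show ?thesis
      using line_index_in_C[OF L c B0] line_subset_C_ideal in_B by blast
  next
    fix js assume L_js: "L = map Ix js" and BV: "?B \<subseteq> V"
    have xs_js: "xs = map e js"
      using xs L unfolding L_js by (intro nth_equalityI) auto
    have "set js \<subseteq> C"
      using V_index_in_C[OF L c _ B0 BV] unfolding L_js by auto
    then have "mul xs \<in> V_products"
      using xs_js in_B BV L unfolding V_products_def L_js by auto
    then show ?thesis
      unfolding C_ideal_def by (simp add: span_base)
  qed
qed

lemma mul_in_C_ideal:
  assumes xs: "length xs = n" "set xs \<subseteq> range e \<union> V" and c: "e c \<in> set xs" "c \<in> C"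
  shows "mul xs \<in> C_ideal"
proof (rule labelled_mul_in_C_ideal)
  define label where "label x = (if x \<in> V then Vx else Ix (inv e x))" for x
  show "length (map label xs) = n"
    using xs by simp
  show "xs ! t \<in> u_set V e (map label xs ! t)" if "t < n" for t
  proof -
    have "xs ! t \<in> range e \<union> V"
      using xs that by (auto intro: nth_mem)
    then show ?thesis
      using that xs(1) by (auto simp: label_def f_inv_into_f)
  qed
  have "label (e c) = Ix c"
    using e_notin_V inv_f_f[OF inj_e] by (simp add: label_def)
  then show "Ix c \<in> set (map label xs)"
    using c(1) by (metis image_eqI list.set_map)
qed (use xs c in auto)

lemma mul_update_in_C_ideal:
  assumes xs: "length xs = n" "set xs \<subseteq> e ` C" and p: "p < n" and q: "q \<in> C_ideal"
  shows "mul (xs[p := q]) \<in> C_ideal"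
proof (rule mul_update_in_subspace[OF xs(1) p C_ideal_subspace _ q[unfolded C_ideal_def]])
  fix a assume a: "a \<in> e ` C \<union> V_products"
  \<comment> \<open>since \<open>n \<ge> 2\<close>, some slot \<open>t \<noteq> p\<close> still holds a basis vector from \<open>C\<close>\<close>
  define t :: nat where "t = (if p = 0 then 1 else 0)"
  have t: "t < n" "t \<noteq> p"
    using arity p unfolding t_def by auto
  then obtain c where c: "c \<in> C" "xs ! t = e c"
    using xs by (metis image_iff nth_mem subsetD)
  then have "e c \<in> set (xs[p := a])"
    using t xs(1) by (metis length_list_update nth_list_update_neq nth_mem)
  moreover have "set (xs[p := a]) \<subseteq> range e \<union> V"
    using xs(2) a V_products_subset_V set_update_subset_insert by fastforce
  ultimately show "mul (xs[p := a]) \<in> C_ideal"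
    using mul_in_C_ideal xs(1) c(1) by simp
qed

text \<open>On the right-hand side of the gLt identity every inner bracket contains one of the basis
  vectors \<open>e\<^sub>c\<close>, \<open>c \<in> C\<close>, of the original inner bracket, and all other outer arguments are
  such basis vectors.\<close>
lemma nested_mul_in_C_ideal:
  assumes gLt: "color_gLt_algebra scale Lg eps n mul alpha"
    and js: "length js = n" "set js \<subseteq> C"
    and ys: "length ys = n - 1" "set ys \<subseteq> range e \<union> V" "\<forall>y\<in>set ys. \<exists>g. y \<in> Lg g" and k: "k < n"
  shows "mul (take k ys @ [mul (map e js)] @ drop k ys) \<in> C_ideal"
proof (rule color_gLt_identity_in_subspace[OF gLt C_ideal_subspace k])
  show "length (map e js) = n" "\<forall>x\<in>set (map e js). \<exists>g. x \<in> Lg g"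
    using js e_homogeneous by auto
  fix i j s1 s2 assume i: "i < n" and j: "j < n" and s1: "s1 permutes {..<n}" and s2: "s2 permutes {..<n - 1}"
  define xs' where "xs' = perm_list s1 (map e js)"
  define ys' where "ys' = perm_list s2 ys"
  define Q where "Q = take j ys' @ [xs' ! i] @ drop j ys'"
  have xs': "length xs' = n" "set xs' \<subseteq> e ` C"
    using js s1 unfolding xs'_def perm_list_eq_permute_list by auto
  have ys': "length ys' = n - 1" "set ys' = set ys"
    using ys s2 unfolding ys'_def perm_list_eq_permute_list by auto
  obtain c where c: "c \<in> C" "xs' ! i = e c"
    using xs' i by (metis image_iff nth_mem subsetD)
  have "length Q = n"
    using ys' arity unfolding Q_def by simp
  moreover have "set Q \<subseteq> range e \<union> V"
    using ys' ys(2) c set_take_subset[of j ys'] set_drop_subset[of j ys'] unfolding Q_def by auto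
  moreover have "e c \<in> set Q"
    using c unfolding Q_def by simp
  ultimately have "mul Q \<in> C_ideal"
    using mul_in_C_ideal c(1) by blast
  then have "mul (xs'[i := mul Q]) \<in> C_ideal"
    using mul_update_in_C_ideal xs' i by blast
  then show "(let xs' = perm_list s1 (map e js); ys' = perm_list s2 ys in
      mul (take i xs' @ [mul (take j ys' @ [xs' ! i] @ drop j ys')] @ drop (Suc i) xs')) \<in> C_ideal"
    using upd_conv_take_nth_drop[of i xs' "mul Q"] xs' i unfolding Q_def xs'_def ys'_def Let_def by simp
qed (use ys in auto)

lemma mul_in_C_ideal_if_V_product_entry:
  assumes gLt: "color_gLt_algebra scale Lg eps n mul alpha"
    and ys: "length ys = n" "k < n" "ys ! k \<in> V_products"
    and others: "\<And>r. r < n \<Longrightarrow> r \<noteq> k \<Longrightarrow> ys ! r \<in> range e \<union> V \<and> (\<exists>g. ys ! r \<in> Lg g)"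
  shows "mul ys \<in> C_ideal"
proof -
  obtain js where js: "ys ! k = mul (map e js)" "length js = n" "set js \<subseteq> C"
    using ys(3) unfolding V_products_def by blast
  define Y where "Y = take k ys @ drop (Suc k) ys"
  have "ys = take k Y @ [mul (map e js)] @ drop k Y"
    using id_take_nth_drop[of k ys] ys(1,2) js(1) unfolding Y_def by simp
  moreover have "y \<in> range e \<union> V \<and> (\<exists>g. y \<in> Lg g)" if y: "y \<in> set Y" for y
  proof -
    obtain r where "r < n" "r \<noteq> k" "ys ! r = y"
      using in_set_take_drop_Suc[OF y[unfolded Y_def]] ys(1) by metis
    then show ?thesis
      using others by blast
  qed
  moreover have "length Y = n - 1"
    using ys(1,2) unfolding Y_def by simp
  ultimately show ?thesis
    using nested_mul_in_C_ideal[OF gLt js(2,3), of Y k] ys(2) by auto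
qed

lemma mul_in_C_ideal_if_entry:
  assumes gLt: "color_gLt_algebra scale Lg eps n mul alpha"
    and zs: "length zs = n" "k < n" "zs ! k \<in> C_ideal"
  shows "mul zs \<in> C_ideal"
proof (rule mul_in_subspace_multilinear[OF C_ideal_subspace _ zs(1)])
  let ?A = "\<lambda>r. if r = k then e ` C \<union> V_products else range e \<union> (\<Union>g. V \<inter> Lg g)"
  show "\<forall>r<n. zs ! r \<in> span (?A r)"
    using zs(3) span_e_and_homogeneous_V unfolding C_ideal_def by auto
  fix ys assume ys: "length ys = n" "\<forall>r<n. ys ! r \<in> ?A r"
  have others: "ys ! r \<in> range e \<union> V \<and> (\<exists>g. ys ! r \<in> Lg g)" if "r < n" "r \<noteq> k" for r
  proof -
    have "ys ! r \<in> range e \<union> (\<Union>g. V \<inter> Lg g)"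
      using ys that by auto
    then show ?thesis
    proof
      assume "ys ! r \<in> range e"
      then show ?thesis
        using e_homogeneous by auto
    qed blast
  qed
  have "ys ! k \<in> e ` C \<union> V_products"
    using ys zs(2) by auto
  then show "mul ys \<in> C_ideal"
  proof
    assume "ys ! k \<in> e ` C"
    then obtain c where c: "c \<in> C" "ys ! k = e c"
      by blast
    have "ys ! r \<in> range e \<union> V" if "r < n" for r
      using others[OF that] c(2) by (cases "r = k") auto
    then have "set ys \<subseteq> range e \<union> V"
      using ys(1) by (metis in_set_conv_nth subsetI)
    moreover have "e c \<in> set ys"
      using c(2) ys(1) zs(2) by (metis nth_mem)
    ultimately show ?thesis
      using mul_in_C_ideal ys(1) c(1) by blast
  qed (rule mul_in_C_ideal_if_V_product_entry[OF gLt ys(1) zs(2) _ others])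
qed

lemma V_products_homogeneous: "x \<in> V_products \<Longrightarrow> \<exists>g. x \<in> Lg g"
  using e_homogeneous mul_homogeneous unfolding V_products_def by fastforce

lemma C_ideal_gLt_ideal:
  assumes gLt: "color_gLt_algebra scale Lg eps n mul alpha"
  shows "gLt_ideal scale Lg n mul C_ideal"
  unfolding gLt_ideal_def
proof (intro conjI allI impI)
  show "graded_subspace scale Lg C_ideal"
    unfolding C_ideal_def by (rule graded_subspace_span) (use e_homogeneous V_products_homogeneous in blast)
  fix s assume s: "s permutes {..<n}"
  show "bracket_set scale n mul (C_ideal # replicate (n - 1) UNIV) s \<subseteq> C_ideal"
  proof (rule bracket_set_subset[OF C_ideal_subspace])
    fix xs assume xs: "length xs = n" "\<forall>r<n. xs ! r \<in> (C_ideal # replicate (n - 1) UNIV) ! r"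
    have "inv s 0 < n" "s (inv s 0) = 0"
      using arity permutes_in_image[OF permutes_inv[OF s]] permutes_inverses(1)[OF s] by auto
    then have "perm_list s xs ! inv s 0 = xs ! 0"
      using s xs(1) by (simp add: perm_list_eq_permute_list permute_list_nth)
    moreover have "xs ! 0 \<in> C_ideal"
      using xs(2)[rule_format, of 0] arity by simp
    ultimately show "mul (perm_list s xs) \<in> C_ideal"
      using mul_in_C_ideal_if_entry[OF gLt] xs(1) \<open>inv s 0 < n\<close> by (simp add: perm_list_eq_permute_list)
  qed
qed

lemma C_ideal_inherited_basis:
  assumes "C \<noteq> {}"
  shows "inherited_basis_ideal scale Lg V W e C_ideal"
  unfolding inherited_basis_ideal_def
proof (intro exI conjI)
  show "graded_subspace scale Lg (span V_products)"
    by (rule graded_subspace_span[OF V_products_homogeneous])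
  show "graded_subspace scale Lg (span (e ` C))"
    by (rule graded_subspace_span) (use e_homogeneous in blast)
  show V_part: "span V_products \<subseteq> V"
    using span_minimal[OF V_products_subset_V V_subspace] .
  show W_part: "span (e ` C) \<subseteq> W"
    using span_e span_mono[of "e ` C" "range e"] by blast
  obtain c where "c \<in> C"
    using assms by blast
  then show "span (e ` C) \<noteq> {0}"
    using e_nonzero span_base by blast
  show "span V_products \<inter> span (e ` C) = {0}"
    using V_part W_part V_inter_W span_zero by auto
  show "C_ideal = {v + w | v w. v \<in> span V_products \<and> w \<in> span (e ` C)}"
    unfolding C_ideal_def Un_commute[of "e ` C"] span_Un ..
qed simp

lemma C_ideal_nonzero:
  assumes "C \<noteq> {}"
  shows "C_ideal \<noteq> {0}"
proof -
  obtain c where "c \<in> C"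
    using assms by blast
  then have "e c \<in> C_ideal"
    unfolding C_ideal_def by (simp add: span_base)
  then show ?thesis
    using e_nonzero by blast
qed

lemma index_in_C_if_e_in_C_ideal:
  assumes "e j \<in> C_ideal"
  shows "j \<in> C"
proof (rule ccontr)
  assume "j \<notin> C"
  obtain w v where wv: "e j = w + v" "w \<in> span (e ` C)" "v \<in> span V_products"
    using assms unfolding C_ideal_def span_Un by blast
  have "v \<in> V"
    using wv(3) span_minimal[OF V_products_subset_V V_subspace] by blast
  moreover have "w \<in> W"
    using wv(2) span_e span_mono[of "e ` C" "range e"] by blast
  then have "e j - w \<in> W"
    using e_in_W subspace_diff[OF W_subspace] by blast
  then have "v \<in> W"
    using wv(1) by (simp add: algebra_simps)
  ultimately have "v = 0"
    using V_inter_W by blast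
  then have "e j \<in> span (e ` C)"
    using wv by simp
  moreover have "e ` C \<subseteq> range e - {e j}"
    using \<open>j \<notin> C\<close> inj_e by (auto dest: injD)
  ultimately have "e j \<in> span (range e - {e j})"
    using span_mono by blast
  then show False
    using independent_e dependent_def by blast
qed

end

context quasi_mult_algebra
begin

lemma connected_if_minimal:
  assumes gLt: "color_gLt_algebra scale Lg eps n mul alpha" and minimal: "minimal scale Lg n mul V W e"
  shows "connected scale n mul V e i j"
proof -
  interpret reach: phi_closed_index_set scale Lg n mul V W e "{x. connected scale n mul V e i x}"
    by unfold_locales (auto intro: connected_phi_step)
  have nonempty: "{x. connected scale n mul V e i x} \<noteq> {}"
    unfolding connected_def by auto
  have "reach.C_ideal = UNIV"
    using minimal reach.C_ideal_nonzero[OF nonempty] reach.C_ideal_gLt_ideal[OF gLt]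
      reach.C_ideal_inherited_basis[OF nonempty]
    unfolding minimal_def by blast
  then show ?thesis
    using reach.index_in_C_if_e_in_C_ideal[of j] by blast
qed

end

theorem theorem4p3:
  fixes scale :: "'f::field \<Rightarrow> 'v::ab_group_add \<Rightarrow> 'v"
    and Lg :: "'g::ab_group_add \<Rightarrow> 'v set"
    and eps :: "'g \<Rightarrow> 'g \<Rightarrow> 'f"
    and n :: nat
    and mul :: "'v list \<Rightarrow> 'v"
    and alpha :: "nat \<Rightarrow> nat \<Rightarrow> nat \<Rightarrow> (nat \<Rightarrow> nat) \<Rightarrow> (nat \<Rightarrow> nat) \<Rightarrow> 'f"
    and V W :: "'v set"
    and e :: "'i \<Rightarrow> 'v"
  assumes "color_gLt_algebra scale Lg eps n mul alpha"
    and "quasi_mult_basis scale Lg n mul V W e"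
    and "mu_quasi_mult scale n mul V e"
    and "tight scale n mul V e"
  shows "minimal scale Lg n mul V W e \<longleftrightarrow> (\<forall>i j. connected scale n mul V e i j)"
proof -
  interpret quasi_mult_algebra scale Lg n mul V W e
    using assms(1,2) unfolding color_gLt_algebra_def by unfold_locales blast+
  show ?thesis
    using minimal_if_connected[OF assms(3,4)] connected_if_minimal[OF assms(1)] by blast
qed

end
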